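(* Let $G=(V,E,\Omega)$ be a connected finite graph with vertex set $V\subset\mathbb{R}^n$, edge set $E$ and a non-empty set $\Omega\subset V$, and let $f:\Omega\to\mathbb{R}^m$. If $u$ is a tight extension of $f$ on $G$, then $u$ is a Kirszbraun extension of $f$ on $G$, i.e. $u(x)=K(u,S(x))(x)$ for all $x\in V\setminus\Omega$ and $u(x)=f(x)$ for all $x\in\Omega$.
   Context: For $x\in V$, $S(x):=\{y\in V:(x,y)\in E\}$. $E(f)$ denotes the set of functions $V\to\mathbb{R}^m$ agreeing with $f$ on $\Omega$; $\|\cdot\|$ is the Euclidean norm. For a finite set $A\subset\mathbb{R}^n$, $g:A\to\mathbb{R}^m$ and $x\in\mathbb{R}^n\setminus A$, $K(g,A)(x)$ denotes the unique $y\in\mathbb{R}^m$ minimizing $\sup_{a\in A}\|g(a)-y\|/\|a-x\|$. For $w\in E(f)$ and $x\in V\setminus\Omega$, $Lw(x):=\sup_{y\in S(x)}\|w(y)-w(x)\|/\|y-x\|$. For $u,v\in E(f)$, $v$ is tighter than $u$ if $\max\{Lu(x):Lu(x)>Lv(x),\,x\in V\setminus\Omega\}>\max\{Lv(x):Lv(x)>Lu(x),\,x\in V\setminus\Omega\}$ (maximum over the empty set is $0$). An extension $u\in E(f)$ is a tight extension of $f$ on $G$ if no $v\in E(f)$ is tighter than $u$. *)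

theory Defs
  imports "HOL-Analysis.Analysis"
begin

definition nbhd :: "('a \<times> 'a) set \<Rightarrow> 'a \<Rightarrow> 'a set" where
  "nbhd E x = {y. (x, y) \<in> E}"

definition ext_set :: "'a set \<Rightarrow> ('a \<Rightarrow> 'b) \<Rightarrow> ('a \<Rightarrow> 'b) set" where
  "ext_set \<Omega> f = {w. \<forall>x\<in>\<Omega>. w x = f x}"

definition kirsz ::
  "(real^'n \<Rightarrow> real^'m) \<Rightarrow> (real^'n) set \<Rightarrow> real^'n \<Rightarrow> real^'m" where
  "kirsz g A x = (THE y. \<forall>z. (SUP a\<in>A. norm (g a - y) / norm (a - x))
                             \<le> (SUP a\<in>A. norm (g a - z) / norm (a - x)))"

definition lip_at ::
  "((real^'n) \<times> (real^'n)) set \<Rightarrow> (real^'n \<Rightarrow> real^'m) \<Rightarrow> real^'n \<Rightarrow> real" where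
  "lip_at E w x = (SUP y\<in>nbhd E x. norm (w y - w x) / norm (y - x))"

definition max0 :: "real set \<Rightarrow> real" where
  "max0 A = (if A = {} then 0 else Max A)"

definition tighter ::
  "(real^'n) set \<Rightarrow> ((real^'n) \<times> (real^'n)) set \<Rightarrow> (real^'n) set
    \<Rightarrow> (real^'n \<Rightarrow> real^'m) \<Rightarrow> (real^'n \<Rightarrow> real^'m) \<Rightarrow> bool" where
  "tighter V E \<Omega> v u \<longleftrightarrow>
     max0 {lip_at E u x | x. x \<in> V - \<Omega> \<and> lip_at E u x > lip_at E v x}
     > max0 {lip_at E v x | x. x \<in> V - \<Omega> \<and> lip_at E v x > lip_at E u x}"

definition tight_ext ::
  "(real^'n) set \<Rightarrow> ((real^'n) \<times> (real^'n)) set \<Rightarrow> (real^'n) set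
    \<Rightarrow> (real^'n \<Rightarrow> real^'m) \<Rightarrow> (real^'n \<Rightarrow> real^'m) \<Rightarrow> bool" where
  "tight_ext V E \<Omega> f u \<longleftrightarrow>
     u \<in> ext_set \<Omega> f \<and> \<not> (\<exists>v\<in>ext_set \<Omega> f. tighter V E \<Omega> v u)"

definition kirszbraun_ext ::
  "(real^'n) set \<Rightarrow> ((real^'n) \<times> (real^'n)) set \<Rightarrow> (real^'n) set
    \<Rightarrow> (real^'n \<Rightarrow> real^'m) \<Rightarrow> (real^'n \<Rightarrow> real^'m) \<Rightarrow> bool" where
  "kirszbraun_ext V E \<Omega> f u \<longleftrightarrow>
     (\<forall>x\<in>V - \<Omega>. u x = kirsz u (nbhd E x) x) \<and> (\<forall>x\<in>\<Omega>. u x = f x)"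

definition fin_conn_graph :: "'a set \<Rightarrow> ('a \<times> 'a) set \<Rightarrow> bool" where
  "fin_conn_graph V E \<longleftrightarrow> finite V \<and> E \<subseteq> V \<times> V \<and> sym E \<and> (\<forall>x. (x, x) \<notin> E)
     \<and> (\<forall>x\<in>V. \<forall>y\<in>V. (x, y) \<in> E\<^sup>*)"

end

theory Submission
  imports Defs
begin

text \<open>If u is not Kirszbraun at some free vertex x, replace u(x) by the Kirszbraun value.
  Since this value is the unique minimiser of the local Lipschitz constant at x, the constant
  at x strictly drops. At any other vertex z the constant can only grow through the edge to x,
  and then it is bounded by the new (smaller) constant at x. Hence the modified extension is
  tighter than u, contradicting tightness.\<close>

lemma finite_SUP_upper:
  fixes f :: "'a \<Rightarrow> real"
  assumes "finite A" "a \<in> A"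
  shows "f a \<le> (SUP a\<in>A. f a)"
  using assms by (intro cSUP_upper) auto

lemma finite_SUP_attained:
  fixes f :: "'a \<Rightarrow> real"
  assumes "finite A" "A \<noteq> {}"
  obtains a where "a \<in> A" "(SUP a\<in>A. f a) = f a"
proof -
  have "(SUP a\<in>A. f a) = Max (f ` A)" using assms by (simp add: cSup_eq_Max)
  moreover have "Max (f ` A) \<in> f ` A" using assms by (intro Max_in) auto
  ultimately show ?thesis using that by auto
qed

lemma continuous_on_finite_SUP:
  fixes h :: "'a \<Rightarrow> 'b::topological_space \<Rightarrow> real"
  assumes "finite A" "A \<noteq> {}" "\<And>a. a \<in> A \<Longrightarrow> continuous_on S (h a)"
  shows "continuous_on S (\<lambda>c. SUP a\<in>A. h a c)"
  using assms
proof (induction A rule: finite_ne_induct)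
  case (singleton a)
  then show ?case by simp
next
  case (insert a A)
  have "(\<lambda>c. SUP a\<in>insert a A. h a c) = (\<lambda>c. max (h a c) (SUP a\<in>A. h a c))"
    using insert by (intro ext, subst cSUP_insert) (auto simp: sup_max)
  then show ?case using insert by (simp only:) (intro continuous_on_max; simp)
qed

definition weighted_radius :: "('a \<Rightarrow> 'b::real_normed_vector) \<Rightarrow> ('a \<Rightarrow> real) \<Rightarrow> 'a set \<Rightarrow> 'b \<Rightarrow> real"
  where "weighted_radius g w A c = (SUP a\<in>A. norm (g a - c) / w a)"

lemma weighted_radius_upper:
  assumes "finite A" "a \<in> A"
  shows "norm (g a - c) / w a \<le> weighted_radius g w A c"
  unfolding weighted_radius_def using assms by (rule finite_SUP_upper)

lemma weighted_radius_has_minimiser: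
  fixes g :: "'a \<Rightarrow> 'b::euclidean_space"
  assumes fin: "finite A" and ne: "A \<noteq> {}" and pos: "\<And>a. a \<in> A \<Longrightarrow> w a > 0"
  obtains y where "\<And>z. weighted_radius g w A y \<le> weighted_radius g w A z"
proof -
  let ?F = "weighted_radius g w A"
  obtain a0 where a0: "a0 \<in> A" using ne by auto
  define R where "R = w a0 * ?F (g a0)"
  have centre: "g a0 \<in> cball (g a0) R"
    using weighted_radius_upper[OF fin a0, of g "g a0" w] pos[OF a0] by (simp add: R_def)
  have "continuous_on (cball (g a0) R) ?F"
    unfolding weighted_radius_def using fin ne
    by (intro continuous_on_finite_SUP) (auto intro!: continuous_intros dest!: pos)
  then obtain y where y: "\<And>z. z \<in> cball (g a0) R \<Longrightarrow> ?F y \<le> ?F z"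
    using continuous_attains_inf[OF compact_cball _] centre by blast
  have "?F y \<le> ?F z" for z
  proof (cases "z \<in> cball (g a0) R")
    case False
    \<comment> \<open>outside the ball the single term at a0 already exceeds the value at the centre\<close>
    then have "?F (g a0) < norm (g a0 - z) / w a0"
      using pos[OF a0] by (simp add: R_def dist_norm field_simps)
    also have "\<dots> \<le> ?F z" using fin a0 by (rule weighted_radius_upper)
    finally show ?thesis using y[OF centre] by linarith
  qed (use y in blast)
  then show ?thesis using that by blast
qed

lemma weighted_radius_minimiser_unique:
  fixes g :: "'a \<Rightarrow> 'b::real_inner"
  assumes fin: "finite A" and ne: "A \<noteq> {}" and pos: "\<And>a. a \<in> A \<Longrightarrow> w a > 0"
    and min1: "\<And>z. weighted_radius g w A y1 \<le> weighted_radius g w A z"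
    and min2: "\<And>z. weighted_radius g w A y2 \<le> weighted_radius g w A z"
  shows "y1 = y2"
proof -
  let ?F = "weighted_radius g w A"
  define r where "r = ?F y1"
  have r2: "?F y2 = r" using min1 min2 unfolding r_def by (meson order.antisym)
  define m where "m = (1/2) *\<^sub>R (y1 + y2)"
  obtain a where a: "a \<in> A" "?F m = norm (g a - m) / w a"
    unfolding weighted_radius_def by (rule finite_SUP_attained[OF fin ne])
  define p q where "p = g a - y1" and "q = g a - y2"
  have "g a - m = (1/2) *\<^sub>R (p + q)"
    unfolding p_def q_def m_def by (simp add: algebra_simps) (simp flip: scaleR_add_left)
  then have "r \<le> norm (p + q) / 2 / w a"
    using min1[of m] a(2) by (simp add: r_def)
  then have "r * w a \<le> norm (p + q) / 2"
    using pos[OF a(1)] by (simp add: field_simps)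
  moreover have "norm p \<le> r * w a"
    using weighted_radius_upper[OF fin a(1), of g y1 w] pos[OF a(1)]
    by (simp add: p_def r_def field_simps)
  moreover have "norm q \<le> r * w a"
    using weighted_radius_upper[OF fin a(1), of g y2 w] pos[OF a(1)] r2
    by (simp add: q_def field_simps)
  moreover have "norm (p + q) \<le> norm p + norm q" by (rule norm_triangle_ineq)
  ultimately have "norm p = norm q" "norm (p + q) = norm p + norm q" by linarith+
  \<comment> \<open>equality in the triangle inequality forces p and q to be parallel\<close>
  then have "p = q" using norm_triangle_eq[of p q] by (cases "norm p = 0") auto
  then show ?thesis by (simp add: p_def q_def)
qed

lemma kirsz_eq_weighted_radius_minimiser:
  "kirsz g A x = (THE y. \<forall>z. weighted_radius g (\<lambda>a. norm (a - x)) A y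
                             \<le> weighted_radius g (\<lambda>a. norm (a - x)) A z)"
  unfolding kirsz_def weighted_radius_def ..

lemma kirsz_strict_minimiser:
  fixes g :: "real^'n \<Rightarrow> real^'m"
  assumes fin: "finite A" and ne: "A \<noteq> {}" and "x \<notin> A" and "c \<noteq> kirsz g A x"
  shows "weighted_radius g (\<lambda>a. norm (a - x)) A (kirsz g A x)
           < weighted_radius g (\<lambda>a. norm (a - x)) A c"
proof -
  let ?F = "weighted_radius g (\<lambda>a. norm (a - x)) A"
  have pos: "norm (a - x) > 0" if "a \<in> A" for a using \<open>x \<notin> A\<close> that by auto
  have unique: "y1 = y2" if "\<And>z. ?F y1 \<le> ?F z" "\<And>z. ?F y2 \<le> ?F z" for y1 y2
    by (rule weighted_radius_minimiser_unique[OF fin ne]) (use pos that in auto)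
  obtain y0 where "\<And>z. ?F y0 \<le> ?F z"
    by (rule weighted_radius_has_minimiser[OF fin ne]) (use pos in auto)
  then have "\<exists>!y. \<forall>z. ?F y \<le> ?F z" using unique by blast
  then have min: "?F (kirsz g A x) \<le> ?F z" for z
    unfolding kirsz_eq_weighted_radius_minimiser by (rule theI'[THEN spec])
  show ?thesis
  proof (rule ccontr)
    assume "\<not> ?F (kirsz g A x) < ?F c"
    then have c_min: "?F c \<le> ?F z" for z using min[of z] min[of c] by linarith
    have "c = kirsz g A x" by (rule unique[OF c_min min])
    then show False using \<open>c \<noteq> kirsz g A x\<close> by contradiction
  qed
qed

lemma fin_conn_graph_nbhd_nonempty:
  assumes "fin_conn_graph V E" "x \<in> V" "w \<in> V" "w \<noteq> x"
  shows "nbhd E x \<noteq> {}"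
proof -
  have "(x, w) \<in> E\<^sup>*" using assms unfolding fin_conn_graph_def by blast
  then obtain y where "(x, y) \<in> E" using assms(4) by (metis converse_rtranclE)
  then show ?thesis by (auto simp: nbhd_def)
qed

lemma fin_conn_graph_finite_nbhd:
  assumes "fin_conn_graph V E"
  shows "finite (nbhd E x)"
  using assms unfolding fin_conn_graph_def nbhd_def by (auto intro: finite_subset)

lemma lip_at_nonneg:
  assumes "finite (nbhd E x)" "nbhd E x \<noteq> {}"
  shows "0 \<le> lip_at E w x"
proof -
  obtain y where y: "y \<in> nbhd E x" using assms(2) by auto
  have "0 \<le> norm (w y - w x) / norm (y - x)" by simp
  also have "\<dots> \<le> lip_at E w x" unfolding lip_at_def using assms(1) y by (rule finite_SUP_upper)
  finally show ?thesis .
qed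

lemma lip_at_fun_upd_self:
  assumes "(x, x) \<notin> E"
  shows "lip_at E (u(x := c)) x = weighted_radius u (\<lambda>a. norm (a - x)) (nbhd E x) c"
  unfolding lip_at_def weighted_radius_def using assms
  by (intro SUP_cong) (auto simp: nbhd_def norm_minus_commute)

lemma lip_at_fun_upd_kirsz_less:
  assumes "fin_conn_graph V E" "nbhd E x \<noteq> {}" "u x \<noteq> kirsz u (nbhd E x) x"
  shows "lip_at E (u(x := kirsz u (nbhd E x) x)) x < lip_at E u x"
proof -
  have loop: "(x, x) \<notin> E" using assms(1) by (simp add: fin_conn_graph_def)
  then have "x \<notin> nbhd E x" by (simp add: nbhd_def)
  with fin_conn_graph_finite_nbhd[OF assms(1)] assms(2) assms(3)
  have "weighted_radius u (\<lambda>a. norm (a - x)) (nbhd E x) (kirsz u (nbhd E x) x)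
          < weighted_radius u (\<lambda>a. norm (a - x)) (nbhd E x) (u x)"
    by (intro kirsz_strict_minimiser)
  then show ?thesis
    using lip_at_fun_upd_self[OF loop, where u=u] lip_at_fun_upd_self[OF loop, where u=u and c="u x"]
    by simp
qed

text \<open>Changing u at x affects the local constant at another vertex z only through
  the edge (z, x), and that term also occurs in the local constant at x.\<close>
lemma lip_at_fun_upd_other:
  assumes "fin_conn_graph V E"
    and grows: "lip_at E (u(x := c)) z > lip_at E u z"
  shows "lip_at E (u(x := c)) z \<le> lip_at E (u(x := c)) x"
proof -
  let ?v = "u(x := c)"
  have fin: "finite (nbhd E y)" for y using assms(1) by (rule fin_conn_graph_finite_nbhd)
  have "nbhd E z \<noteq> {}" using grows by (auto simp: lip_at_def)
  then obtain y where y: "y \<in> nbhd E z" "lip_at E ?v z = norm (?v y - ?v z) / norm (y - z)"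
    unfolding lip_at_def by (rule finite_SUP_attained[OF fin])
  consider "z = x" | "y = x" | "z \<noteq> x" "y \<noteq> x" by blast
  then show ?thesis
  proof cases
    case 2
    then have "z \<in> nbhd E x"
      using y(1) assms(1) by (auto simp: nbhd_def fin_conn_graph_def sym_def)
    with fin have "norm (?v z - ?v x) / norm (z - x) \<le> lip_at E ?v x"
      unfolding lip_at_def by (rule finite_SUP_upper)
    then show ?thesis using y(2) 2 by (simp add: norm_minus_commute)
  next
    case 3
    then have "lip_at E ?v z = norm (u y - u z) / norm (y - z)" using y by simp
    also have "\<dots> \<le> lip_at E u z" unfolding lip_at_def using fin y(1) by (rule finite_SUP_upper)
    finally show ?thesis using grows by simp
  qed simp
qed

lemma tighter_if_dominated:
  assumes "finite V" "x \<in> V - \<Omega>" "lip_at E v x < lip_at E u x" "0 \<le> lip_at E v x"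
    and "\<And>z. z \<in> V - \<Omega> \<Longrightarrow> lip_at E v z > lip_at E u z \<Longrightarrow> lip_at E v z \<le> lip_at E v x"
  shows "tighter V E \<Omega> v u"
proof -
  define S1 where "S1 = {lip_at E u z | z. z \<in> V - \<Omega> \<and> lip_at E u z > lip_at E v z}"
  define S2 where "S2 = {lip_at E v z | z. z \<in> V - \<Omega> \<and> lip_at E v z > lip_at E u z}"
  have "finite S1" unfolding S1_def using assms(1) by (auto intro: finite_subset[of _ "lip_at E u ` V"])
  moreover have "lip_at E u x \<in> S1" unfolding S1_def using assms(2,3) by auto
  ultimately have "lip_at E u x \<le> max0 S1" unfolding max0_def by auto
  moreover have "finite S2" unfolding S2_def using assms(1) by (auto intro: finite_subset[of _ "lip_at E v ` V"])
  then have "max0 S2 \<le> lip_at E v x" unfolding max0_def using assms(4,5) by (auto simp: S2_def)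
  ultimately show ?thesis unfolding tighter_def S1_def S2_def using assms(3) by linarith
qed

theorem mainTheorem2:
  fixes V \<Omega> :: "(real^'n) set" and E :: "((real^'n) \<times> (real^'n)) set"
    and f u :: "real^'n \<Rightarrow> real^'m"
  assumes "fin_conn_graph V E"
    and "\<Omega> \<subseteq> V" and "\<Omega> \<noteq> {}"
    and "tight_ext V E \<Omega> f u"
  shows "kirszbraun_ext V E \<Omega> f u"
proof -
  have "u x = kirsz u (nbhd E x) x" if x: "x \<in> V - \<Omega>" for x
  proof (rule ccontr)
    assume ne: "u x \<noteq> kirsz u (nbhd E x) x"
    define v where "v = u(x := kirsz u (nbhd E x) x)"
    obtain w where "w \<in> \<Omega>" using assms(3) by auto
    then have N: "nbhd E x \<noteq> {}"
      using fin_conn_graph_nbhd_nonempty[OF assms(1)] assms(2) x by blast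
    have "lip_at E v x < lip_at E u x"
      unfolding v_def using assms(1) N ne by (rule lip_at_fun_upd_kirsz_less)
    then have "tighter V E \<Omega> v u"
      using assms(1) x lip_at_fun_upd_other[OF assms(1)]
        lip_at_nonneg[OF fin_conn_graph_finite_nbhd[OF assms(1)] N]
      by (intro tighter_if_dominated) (auto simp: fin_conn_graph_def v_def)
    moreover have "v \<in> ext_set \<Omega> f" using assms(4) x by (auto simp: tight_ext_def ext_set_def v_def)
    ultimately show False using assms(4) by (auto simp: tight_ext_def)
  qed
  then show ?thesis using assms(4) by (auto simp: kirszbraun_ext_def tight_ext_def ext_set_def)
qed

end
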